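(* Consider the sparse support recovery problem described in the context, with $P_0\neq P_1$ and $D_{\mathrm{KL}}=\max\{D(P_0\|P_1),D(P_1\|P_0)\}\in(0,\infty)$. Let $\delta>0$. Any uniform coordinate-wise (sequential) sampling and estimation procedure whose expected number of samples satisfies $\mathbb{E}[\sum_{i,j}\Gamma_{i,j}]\le nm$ with $$m \le \frac{\log s + \log\left(\frac{1}{4\delta}\right)}{D_{\mathrm{KL}}}$$ has family-wise error rate $\mathbb{P}_e=\mathbb{P}(\hat{\mathcal S}\neq\mathcal S)\ge 1-e^{-\delta}$.
   Context: Setting: $n\ge 2$ is the dimension and $\mathcal S\subset\{1,\dots,n\}$ is an unknown support set with $|\mathcal S|=s$, where $1\le s\le n/2$. $P_0,P_1$ are probability densities (or mass functions) on a common space $\mathcal Y$ with common support, w.r.t. a common dominating measure. For each $i$, we can observe i.i.d. samples $Y_{i,1},Y_{i,2},\dots$ with $Y_{i,j}\sim P_0$ if $i\notin\mathcal S$ and $Y_{i,j}\sim P_1$ if $i\in\mathcal S$; all samples are independent across $i$ and $j$. $D(P\|Q)=\mathbb{E}_P[\log(P(Y)/Q(Y))]$ is the Kullback–Leibler divergence. A sampling procedure is a collection of functions $\Gamma_{i,j}$, $i\in\{1,\dots,n\}$, $j\in\mathbb N$, with $\Gamma_{i,j}$ a $\{0,1\}$-valued function of $(Y_{i,1},\dots,Y_{i,j-1})$; $Y_{i,j}$ is observed iff $\Gamma_{i,j}=1$. A procedure is uniform coordinate-wise if $\Gamma_{i,j}$ is the same function for every $i$, and the decision whether $i\in\hat{\mathcal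 S}$ is made by the same rule for every $i$ using only the observed samples of coordinate $i$. The estimate $\hat{\mathcal S}$ is formed from the observed samples; $\mathbb{P}_e=\mathbb{P}(\hat{\mathcal S}\ne\mathcal S)$. The budget parameter $m\ge0$ means $\mathbb{E}[\sum_{i,j}\Gamma_{i,j}]\le nm$ (on average at most $m$ samples per coordinate). *)

theory Defs
  imports "HOL-Probability.Probability"
begin

text \<open>A uniform coordinate-wise sequential sampling rule is a single function
  Gam on observation records: given the record of the first j-1 sample slots of a
  coordinate (Some y if the slot was observed with value y, None otherwise),
  Gam decides whether the j-th sample is observed. Indices are 0-based:
  slot j = sample Y_{i,j+1}.\<close>

fun obs_prefix :: "('y option list \<Rightarrow> bool) \<Rightarrow> (nat \<Rightarrow> 'y) \<Rightarrow> nat \<Rightarrow> 'y option list" where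
  "obs_prefix Gam w 0 = []"
| "obs_prefix Gam w (Suc j) =
     obs_prefix Gam w j @ [if Gam (obs_prefix Gam w j) then Some (w j) else None]"

definition sampled :: "('y option list \<Rightarrow> bool) \<Rightarrow> (nat \<Rightarrow> 'y) \<Rightarrow> nat \<Rightarrow> bool" where
  "sampled Gam w j = Gam (obs_prefix Gam w j)"

definition observed :: "('y option list \<Rightarrow> bool) \<Rightarrow> (nat \<Rightarrow> 'y) \<Rightarrow> nat \<Rightarrow> 'y option" where
  "observed Gam w j = (if sampled Gam w j then Some (w j) else None)"

definition num_samples :: "('y option list \<Rightarrow> bool) \<Rightarrow> (nat \<Rightarrow> 'y) \<Rightarrow> ennreal" where
  "num_samples Gam w = (\<Sum>j. if sampled Gam w j then 1 else 0)"

definition KL_dens :: "'y measure \<Rightarrow> ('y \<Rightarrow> real) \<Rightarrow> ('y \<Rightarrow> real) \<Rightarrow> real" where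
  "KL_dens mu p q = (\<integral>y. ln (p y / q y) \<partial>(density mu p))"

definition sample_space ::
  "nat \<Rightarrow> nat set \<Rightarrow> 'y measure \<Rightarrow> 'y measure \<Rightarrow> (nat \<Rightarrow> nat \<Rightarrow> 'y) measure" where
  "sample_space n S P0 P1 =
     PiM {1..n} (\<lambda>i. PiM (UNIV :: nat set) (\<lambda>_. if i \<in> S then P1 else P0))"

definition est_support ::
  "nat \<Rightarrow> ('y option list \<Rightarrow> bool) \<Rightarrow> ((nat \<Rightarrow> 'y option) \<Rightarrow> bool) \<Rightarrow> (nat \<Rightarrow> nat \<Rightarrow> 'y) \<Rightarrow> nat set" where
  "est_support n Gam dec w = {i \<in> {1..n}. dec (observed Gam (w i))}"

end

theory Submission
  imports Defs
begin

text \<open>Every coordinate is handled by the same sequential rule, independently, so the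
  support is recovered with probability p0^(n-s) q1^s, where p0 and q1 are the
  probabilities that a null and a non-null coordinate are classified correctly.
  Comparing the laws of one coordinate under P0 and P1 by a change of measure along the
  stopped observation record gives, for every t in (0,1], the trade-off
  (1 - q1)(1 - 1/t) - p0 ln t \<le> E0[N] D, and symmetrically with P0 and P1 exchanged;
  here Wald's identity turns the expected log-likelihood ratio of the samples actually
  taken into E[N] times a Kullback-Leibler divergence. If p0^(n-s) q1^s exceeded
  exp(-\<delta>), the total defect (n-s)(1-p0) + s(1-q1) would be below \<delta>, and the
  trade-offs at t = \<delta>/s and t = \<delta>/(n-s) would push the budget n m above
  n (ln s + ln (1/(4\<delta>))) / D.\<close>

text \<open>The rule that governs slots 1, 2, ... once slot 0 has held y, re-indexed from 0.\<close>

definition residual_rule :: "('y option list \<Rightarrow> bool) \<Rightarrow> 'y \<Rightarrow> 'y option list \<Rightarrow> bool" where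
  "residual_rule Gam y p = Gam ((if Gam [] then Some y else None) # p)"

definition prefix_determined :: "('y option list \<Rightarrow> bool) \<Rightarrow> nat \<Rightarrow> ((nat \<Rightarrow> 'y) \<Rightarrow> 'b) \<Rightarrow> bool" where
  "prefix_determined Gam T G \<longleftrightarrow> (\<forall>w w'. obs_prefix Gam w T = obs_prefix Gam w' T \<longrightarrow> G w = G w')"

lemma obs_prefix_case_nat_Suc:
  "obs_prefix Gam (case_nat y w) (Suc T) =
     (if Gam [] then Some y else None) # obs_prefix (residual_rule Gam y) w T"
  by (induction T) (auto simp: residual_rule_def)

lemma sampled_0: "sampled Gam w 0 = Gam []"
  by (simp add: sampled_def)

lemma sampled_case_nat_Suc:
  "sampled Gam (case_nat y w) (Suc j) = sampled (residual_rule Gam y) w j"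
  unfolding sampled_def obs_prefix_case_nat_Suc residual_rule_def ..

lemma residual_rule_not_first: "\<not> Gam [] \<Longrightarrow> residual_rule Gam y = residual_rule Gam y'"
  by (simp add: residual_rule_def fun_eq_iff)

lemma length_obs_prefix [simp]: "length (obs_prefix Gam w T) = T"
  by (induction T) auto

lemma take_obs_prefix: "j \<le> T \<Longrightarrow> take j (obs_prefix Gam w T) = obs_prefix Gam w j"
  by (induction T) (auto simp: le_Suc_eq)

lemma obs_prefix_eq_after_stop:
  assumes eq: "obs_prefix Gam w T = obs_prefix Gam w' T" and stop: "\<forall>j\<ge>T. \<not> sampled Gam w j"
  shows "obs_prefix Gam w j = obs_prefix Gam w' j"
proof (induction j)
  case (Suc j)
  show ?case
  proof (cases "Suc j \<le> T")
    case True
    then show ?thesis by (metis eq take_obs_prefix)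
  next
    case False
    then show ?thesis using stop[rule_format, of j] Suc.IH by (simp add: sampled_def)
  qed
qed simp

lemma prefix_determined_stopped:
  "prefix_determined Gam T (\<lambda>w. (\<forall>j\<ge>T. \<not> sampled Gam w j) \<and> A (observed Gam w))"
proof -
  have "(\<forall>j\<ge>T. \<not> sampled Gam w' j) \<and> A (observed Gam w')"
    if eq: "obs_prefix Gam w T = obs_prefix Gam w' T"
      and stop: "\<forall>j\<ge>T. \<not> sampled Gam w j" and A: "A (observed Gam w)" for w w'
  proof -
    have pre: "obs_prefix Gam w j = obs_prefix Gam w' j" for j
      using obs_prefix_eq_after_stop[OF eq stop] .
    then have "observed Gam w' = observed Gam w"
      using pre[of "Suc _"] by (auto simp: fun_eq_iff observed_def sampled_def)
    then show ?thesis using stop A pre by (simp add: sampled_def)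
  qed
  then show ?thesis unfolding prefix_determined_def by metis
qed

lemma prefix_determined_case_nat:
  "prefix_determined Gam (Suc T) G \<Longrightarrow>
     prefix_determined (residual_rule Gam y) T (\<lambda>\<omega>. G (case_nat y \<omega>))"
  unfolding prefix_determined_def by (metis obs_prefix_case_nat_Suc)

lemma prefix_determined_unsampled_first:
  assumes "\<not> Gam []" "prefix_determined Gam (Suc T) G"
  shows "G (case_nat y \<omega>) = G (case_nat y' \<omega>)"
  using assms residual_rule_not_first[of Gam y y', OF assms(1)]
  unfolding prefix_determined_def by (metis obs_prefix_case_nat_Suc)

lemma prefix_determined_comp:
  "prefix_determined Gam T A \<Longrightarrow> prefix_determined Gam T (\<lambda>w. f (A w))"
  unfolding prefix_determined_def by metis

section \<open>Wald's identity on sequence spaces\<close>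

lemma (in sequence_space) nn_integral_case_nat:
  assumes F: "F \<in> borel_measurable S"
  shows "(\<integral>\<^sup>+w. F w \<partial>S) = (\<integral>\<^sup>+y. \<integral>\<^sup>+\<omega>. F (case_nat y \<omega>) \<partial>S \<partial>M)"
proof -
  have m: "(\<lambda>(s, \<omega>). case_nat s \<omega>) \<in> measurable (M \<Otimes>\<^sub>M S) S" by measurable
  have "(\<integral>\<^sup>+w. F w \<partial>S) = (\<integral>\<^sup>+w. F w \<partial>distr (M \<Otimes>\<^sub>M S) S (\<lambda>(s, \<omega>). case_nat s \<omega>))"
    by (simp add: PiM_iter)
  also have "\<dots> = (\<integral>\<^sup>+x. F (case_prod case_nat x) \<partial>(M \<Otimes>\<^sub>M S))"
    using F m by (subst nn_integral_distr) auto
  also have "\<dots> = (\<integral>\<^sup>+y. \<integral>\<^sup>+\<omega>. F (case_nat y \<omega>) \<partial>S \<partial>M)"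
    using F m by (subst P.nn_integral_fst[symmetric]) (auto intro: measurable_compose)
  finally show ?thesis .
qed

lemma (in sequence_space) borel_measurable_nn_integral_case_nat:
  assumes F: "F \<in> borel_measurable S"
  shows "(\<lambda>y. \<integral>\<^sup>+\<omega>. F (case_nat y \<omega>) \<partial>S) \<in> borel_measurable M"
proof -
  have "(\<lambda>(s, \<omega>). case_nat s \<omega>) \<in> measurable (M \<Otimes>\<^sub>M S) S" by measurable
  from P.borel_measurable_nn_integral_fst[OF measurable_compose[OF this F]] show ?thesis
    by simp
qed

lemma (in sequence_space) case_nat_in_space:
  "y \<in> space M \<Longrightarrow> \<omega> \<in> space S \<Longrightarrow> case_nat y \<omega> \<in> space S"
  by (auto simp: space_PiM PiE_iff split: nat.split)

lemma (in sequence_space) measurable_sampled_residual_rule: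
  assumes samp: "\<forall>j. (\<lambda>w. sampled Gam w j) \<in> measurable S (count_space UNIV)" and y: "y \<in> space M"
  shows "\<forall>j. (\<lambda>w. sampled (residual_rule Gam y) w j) \<in> measurable S (count_space UNIV)"
proof
  fix j
  have "(\<lambda>w. case_nat y w) \<in> measurable S S"
    using y by measurable
  from measurable_compose[OF this samp[rule_format, of "Suc j"]]
  show "(\<lambda>w. sampled (residual_rule Gam y) w j) \<in> measurable S (count_space UNIV)"
    by (simp add: sampled_case_nat_Suc)
qed

lemma (in sequence_space) emeasure_sampled_Suc:
  assumes samp: "\<forall>j. (\<lambda>w. sampled Gam w j) \<in> measurable S (count_space UNIV)"
  shows "(\<lambda>y. emeasure S {\<omega>\<in>space S. sampled (residual_rule Gam y) \<omega> j}) \<in> borel_measurable M"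
    and "emeasure S {w\<in>space S. sampled Gam w (Suc j)}
           = (\<integral>\<^sup>+y. emeasure S {\<omega>\<in>space S. sampled (residual_rule Gam y) \<omega> j} \<partial>M)"
proof -
  let ?A = "{w\<in>space S. sampled Gam w (Suc j)}"
  have A: "?A \<in> sets S"
    using samp[rule_format, of "Suc j"] by measurable
  have eq: "emeasure S {\<omega>\<in>space S. sampled (residual_rule Gam y) \<omega> j}
              = (\<integral>\<^sup>+\<omega>. indicator ?A (case_nat y \<omega>) \<partial>S)" if y: "y \<in> space M" for y
  proof -
    have "{\<omega>\<in>space S. sampled (residual_rule Gam y) \<omega> j} \<in> sets S"
      using measurable_sampled_residual_rule[OF samp y, rule_format, of j] by measurable
    then have "emeasure S {\<omega>\<in>space S. sampled (residual_rule Gam y) \<omega> j}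
        = (\<integral>\<^sup>+\<omega>. indicator {\<omega>\<in>space S. sampled (residual_rule Gam y) \<omega> j} \<omega> \<partial>S)"
      by simp
    also have "\<dots> = (\<integral>\<^sup>+\<omega>. indicator ?A (case_nat y \<omega>) \<partial>S)"
      using y by (intro nn_integral_cong) (simp add: indicator_def sampled_case_nat_Suc case_nat_in_space)
    finally show ?thesis .
  qed
  show "(\<lambda>y. emeasure S {\<omega>\<in>space S. sampled (residual_rule Gam y) \<omega> j}) \<in> borel_measurable M"
    using borel_measurable_nn_integral_case_nat[of "indicator ?A"] A
    by (subst measurable_cong[OF eq]) auto
  have "emeasure S ?A = (\<integral>\<^sup>+y. \<integral>\<^sup>+\<omega>. indicator ?A (case_nat y \<omega>) \<partial>S \<partial>M)"
    using A by (simp add: nn_integral_case_nat[symmetric])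
  also have "\<dots> = (\<integral>\<^sup>+y. emeasure S {\<omega>\<in>space S. sampled (residual_rule Gam y) \<omega> j} \<partial>M)"
    by (intro nn_integral_cong) (simp add: eq)
  finally show "emeasure S ?A = \<dots>" .
qed

text \<open>Wald's identity for a single slot: whether slot j is sampled depends only on the
  earlier slots, which are independent of the value in slot j.\<close>

lemma (in sequence_space) nn_integral_sampled_slot:
  assumes "\<forall>j. (\<lambda>w. sampled Gam w j) \<in> measurable S (count_space UNIV)"
    and \<phi>: "\<phi> \<in> borel_measurable M"
  shows "(\<integral>\<^sup>+w. (if sampled Gam w j then \<phi> (w j) else 0) \<partial>S)
       = emeasure S {w\<in>space S. sampled Gam w j} * (\<integral>\<^sup>+y. \<phi> y \<partial>M)"
  using assms(1)
proof (induction j arbitrary: Gam)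
  case 0
  have "(\<integral>\<^sup>+w. \<phi> (w 0) \<partial>S) = (\<integral>\<^sup>+y. \<phi> y \<partial>distr S M (\<lambda>w. w 0))"
    using \<phi> by (subst nn_integral_distr) auto
  then show ?case
    by (cases "Gam []") (simp_all add: sampled_0 PiM_component P.emeasure_space_1)
next
  case (Suc j)
  note samp = Suc.prems
  have "(\<integral>\<^sup>+w. (if sampled Gam w (Suc j) then \<phi> (w (Suc j)) else 0) \<partial>S)
     = (\<integral>\<^sup>+y. \<integral>\<^sup>+\<omega>. (if sampled (residual_rule Gam y) \<omega> j then \<phi> (\<omega> j) else 0) \<partial>S \<partial>M)"
    using samp[rule_format, of "Suc j"] \<phi>
    by (subst nn_integral_case_nat) (auto simp: sampled_case_nat_Suc intro!: nn_integral_cong)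
  also have "\<dots> = (\<integral>\<^sup>+y. emeasure S {\<omega>\<in>space S. sampled (residual_rule Gam y) \<omega> j} * (\<integral>\<^sup>+y. \<phi> y \<partial>M) \<partial>M)"
    using Suc.IH[OF measurable_sampled_residual_rule[OF samp]] by (intro nn_integral_cong) simp
  also have "\<dots> = emeasure S {w\<in>space S. sampled Gam w (Suc j)} * (\<integral>\<^sup>+y. \<phi> y \<partial>M)"
    using emeasure_sampled_Suc[OF samp] by (simp add: nn_integral_multc)
  finally show ?case .
qed

lemma (in sequence_space) integral_sampled_slot:
  assumes samp: "\<forall>j. (\<lambda>w. sampled Gam w j) \<in> measurable S (count_space UNIV)"
    and \<phi>: "integrable M \<phi>"
  shows "integrable S (\<lambda>w. if sampled Gam w j then \<phi> (w j) else 0)"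
    and "(\<integral>w. (if sampled Gam w j then \<phi> (w j) else 0) \<partial>S)
           = measure S {w\<in>space S. sampled Gam w j} * (\<integral>y. \<phi> y \<partial>M)"
proof -
  have nonneg: "integrable S (\<lambda>w. if sampled Gam w j then \<psi> (w j) else 0) \<and>
      (\<integral>w. (if sampled Gam w j then \<psi> (w j) else 0) \<partial>S)
        = measure S {w\<in>space S. sampled Gam w j} * (\<integral>y. \<psi> y \<partial>M)"
    if \<psi>: "integrable M \<psi>" "\<And>y. 0 \<le> \<psi> y" for \<psi>
  proof -
    have [measurable]: "(\<lambda>w. sampled Gam w j) \<in> measurable S (count_space UNIV)"
      using samp by blast
    have [measurable]: "\<psi> \<in> borel_measurable M"
      using \<psi>(1) by simp
    have "(\<integral>\<^sup>+w. ennreal (if sampled Gam w j then \<psi> (w j) else 0) \<partial>S)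
        = (\<integral>\<^sup>+w. (if sampled Gam w j then ennreal (\<psi> (w j)) else 0) \<partial>S)"
      by (intro nn_integral_cong) simp
    also have "\<dots> = emeasure S {w\<in>space S. sampled Gam w j} * (\<integral>\<^sup>+y. ennreal (\<psi> y) \<partial>M)"
      using samp by (rule nn_integral_sampled_slot) simp
    also have "\<dots> = ennreal (measure S {w\<in>space S. sampled Gam w j} * (\<integral>y. \<psi> y \<partial>M))"
      using \<psi> by (simp add: nn_integral_eq_integral P.emeasure_eq_measure ennreal_mult' integral_nonneg)
    finally have nn: "(\<integral>\<^sup>+w. ennreal (if sampled Gam w j then \<psi> (w j) else 0) \<partial>S) = \<dots>" .
    show ?thesis
      using nn \<psi>(2) by (auto simp: integral_nonneg integral_eq_nn_integral
          intro!: integrableI_nn_integral_finite)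
  qed
  have \<phi>_split: "\<phi> y = max (\<phi> y) 0 - max (- \<phi> y) 0" for y
    by simp
  have "(\<lambda>w. if sampled Gam w j then \<phi> (w j) else 0)
      = (\<lambda>w. (if sampled Gam w j then max (\<phi> (w j)) 0 else 0)
           - (if sampled Gam w j then max (- \<phi> (w j)) 0 else 0))"
    by (auto simp: fun_eq_iff)
  moreover note pos = nonneg[of "\<lambda>y. max (\<phi> y) 0"] and neg = nonneg[of "\<lambda>y. max (- \<phi> y) 0"]
  moreover have "(\<integral>y. \<phi> y \<partial>M) = (\<integral>y. max (\<phi> y) 0 \<partial>M) - (\<integral>y. max (- \<phi> y) 0 \<partial>M)"
    using \<phi> by (subst \<phi>_split) (simp del: max_def)
  ultimately show "integrable S (\<lambda>w. if sampled Gam w j then \<phi> (w j) else 0)"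
    and "(\<integral>w. (if sampled Gam w j then \<phi> (w j) else 0) \<partial>S)
           = measure S {w\<in>space S. sampled Gam w j} * (\<integral>y. \<phi> y \<partial>M)"
    using \<phi> by (simp_all add: right_diff_distrib)
qed

section \<open>Change of measure along the observation record\<close>

definition observed_llr :: "('y \<Rightarrow> real) \<Rightarrow> ('y option list \<Rightarrow> bool) \<Rightarrow> nat \<Rightarrow> (nat \<Rightarrow> 'y) \<Rightarrow> real" where
  "observed_llr L Gam T w = (\<Sum>j<T. if sampled Gam w j then L (w j) else 0)"

lemma observed_llr_case_nat_Suc:
  "observed_llr L Gam (Suc T) (case_nat y \<omega>) =
     (if Gam [] then L y else 0) + observed_llr L (residual_rule Gam y) T \<omega>"
  unfolding observed_llr_def sum.lessThan_Suc_shift sampled_0 sampled_case_nat_Suc nat.case by simp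

lemma observed_llr_unsampled_first:
  "\<not> Gam [] \<Longrightarrow> observed_llr L Gam (Suc T) (case_nat y \<omega>) = observed_llr L Gam (Suc T) (case_nat y' \<omega>)"
  using residual_rule_not_first[of Gam y y'] by (simp add: observed_llr_case_nat_Suc)

lemma borel_measurable_observed_llr:
  assumes "\<forall>j. (\<lambda>w. sampled Gam w j) \<in> measurable (PiM UNIV (\<lambda>_. P)) (count_space UNIV)"
    and [measurable]: "L \<in> borel_measurable P"
  shows "observed_llr L Gam T \<in> borel_measurable (PiM UNIV (\<lambda>_. P))"
proof -
  have [measurable]: "(\<lambda>w. sampled Gam w j) \<in> measurable (PiM UNIV (\<lambda>_. P)) (count_space UNIV)" for j
    using assms(1) by blast
  show ?thesis
    unfolding observed_llr_def[abs_def] by measurable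
qed

lemma (in sequence_space) integral_observed_llr:
  assumes samp: "\<forall>j. (\<lambda>w. sampled Gam w j) \<in> measurable S (count_space UNIV)"
    and L: "integrable M L"
  shows "integrable S (observed_llr L Gam T)"
    and "(\<integral>w. observed_llr L Gam T w \<partial>S)
           = (\<Sum>j<T. measure S {w\<in>space S. sampled Gam w j}) * (\<integral>y. L y \<partial>M)"
  using integral_sampled_slot[OF samp L]
  by (simp_all add: observed_llr_def[abs_def] sum_distrib_right)

lemma sequence_space_prob_space: "prob_space P \<Longrightarrow> sequence_space P"
  by (simp add: sequence_space_def product_prob_space_def product_prob_space_axioms_def
      product_sigma_finite_def prob_space_imp_sigma_finite)

lemma nn_integral_density_exp_cancel:
  assumes Q_eq: "Q = density P (\<lambda>y. ennreal (exp (- L y)))"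
    and [measurable]: "L \<in> borel_measurable P" "K \<in> borel_measurable P"
  shows "(\<integral>\<^sup>+y. K y * ennreal (exp (L y)) \<partial>Q) = (\<integral>\<^sup>+y. K y \<partial>P)"
proof -
  have "(\<integral>\<^sup>+y. K y * ennreal (exp (L y)) \<partial>Q)
      = (\<integral>\<^sup>+y. ennreal (exp (- L y)) * (K y * ennreal (exp (L y))) \<partial>P)"
    unfolding Q_eq by (subst nn_integral_density) auto
  also have "\<dots> = (\<integral>\<^sup>+y. K y \<partial>P)"
    by (intro nn_integral_cong) (simp add: mult.left_commute ennreal_mult'[symmetric] exp_add[symmetric])
  finally show ?thesis .
qed

text \<open>Induction on T: integrate out slot 0
  (which is reweighted only if the rule samples it) and recurse on the residual rule.\<close>

lemma nn_integral_PiM_density_prefix_determined: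
  assumes P: "prob_space P" and Q: "prob_space Q"
    and Q_eq: "Q = density P (\<lambda>y. ennreal (exp (- L y)))"
    and L[measurable]: "L \<in> borel_measurable P"
    and samp: "\<forall>j. (\<lambda>w. sampled Gam w j) \<in> measurable (PiM UNIV (\<lambda>_. P)) (count_space UNIV)"
    and G: "G \<in> borel_measurable (PiM UNIV (\<lambda>_. P))" and pre: "prefix_determined Gam T G"
  shows "(\<integral>\<^sup>+w. G w \<partial>PiM UNIV (\<lambda>_. Q))
      = (\<integral>\<^sup>+w. G w * ennreal (exp (- observed_llr L Gam T w)) \<partial>PiM UNIV (\<lambda>_. P))"
proof -
  interpret SP: sequence_space P by (rule sequence_space_prob_space[OF P])
  interpret SQ: sequence_space Q by (rule sequence_space_prob_space[OF Q])
  let ?SP = "PiM (UNIV::nat set) (\<lambda>_. P)" and ?SQ = "PiM (UNIV::nat set) (\<lambda>_. Q)"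
  have sets_Q: "sets Q = sets P"
    by (simp add: Q_eq)
  have sets_SQ: "sets ?SQ = sets ?SP"
    by (rule sets_PiM_cong) (simp_all add: sets_Q)
  from samp G pre show ?thesis
  proof (induction T arbitrary: Gam G)
    case 0
    obtain w0 where "w0 \<in> space ?SP"
      using SP.P.not_empty by blast
    define g0 where "g0 = G w0"
    have "G = (\<lambda>_. g0)"
      using "0.prems"(3) by (auto simp: g0_def prefix_determined_def fun_eq_iff)
    then show ?case
      by (simp add: observed_llr_def SQ.P.emeasure_space_1 SP.P.emeasure_space_1)
  next
    case (Suc T)
    note samp = Suc.prems(1) and G = Suc.prems(2) and pre = Suc.prems(3)
    define c where "c y = (if Gam [] then L y else 0)" for y
    define F where "F w = G w * ennreal (exp (- observed_llr L Gam (Suc T) w))" for w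
    define K where "K y = (\<integral>\<^sup>+\<omega>. F (case_nat y \<omega>) \<partial>?SP)" for y
    have F[measurable]: "F \<in> borel_measurable ?SP"
      unfolding F_def using G borel_measurable_observed_llr[OF samp L] by measurable
    have K[measurable]: "K \<in> borel_measurable P"
      unfolding K_def by (rule SP.borel_measurable_nn_integral_case_nat[OF F])
    have inner: "(\<integral>\<^sup>+\<omega>. G (case_nat y \<omega>) \<partial>?SQ) = K y * ennreal (exp (c y))" if y: "y \<in> space P" for y
    proof -
      have shift: "(\<lambda>\<omega>. case_nat y \<omega>) \<in> measurable ?SP ?SP"
        using y by measurable
      then have "(\<lambda>\<omega>. G (case_nat y \<omega>)) \<in> borel_measurable ?SP"
        using G by measurable
      then have "(\<integral>\<^sup>+\<omega>. G (case_nat y \<omega>) \<partial>?SQ)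
          = (\<integral>\<^sup>+\<omega>. G (case_nat y \<omega>) * ennreal (exp (- observed_llr L (residual_rule Gam y) T \<omega>)) \<partial>?SP)"
        using Suc.IH SP.measurable_sampled_residual_rule[OF samp y] prefix_determined_case_nat[OF pre]
        by blast
      also have "\<dots> = (\<integral>\<^sup>+\<omega>. F (case_nat y \<omega>) * ennreal (exp (c y)) \<partial>?SP)"
        by (intro nn_integral_cong)
          (simp add: F_def c_def observed_llr_case_nat_Suc mult.assoc ennreal_mult'[symmetric]
            exp_add[symmetric])
      also have "\<dots> = K y * ennreal (exp (c y))"
        unfolding K_def by (intro nn_integral_multc measurable_compose[OF shift F])
      finally show ?thesis .
    qed
    have outer: "(\<integral>\<^sup>+y. K y * ennreal (exp (c y)) \<partial>Q) = (\<integral>\<^sup>+y. K y \<partial>P)"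
    proof (cases "Gam []")
      case True
      then show ?thesis
        unfolding c_def using nn_integral_density_exp_cancel[OF Q_eq L K] by simp
    next
      case False
      obtain y0 where "y0 \<in> space P"
        using SP.M.not_empty by blast
      define k0 where "k0 = K y0"
      have F_const: "F (case_nat y \<omega>) = F (case_nat y0 \<omega>)" for y \<omega>
        using prefix_determined_unsampled_first[OF False pre, of y \<omega> y0]
          observed_llr_unsampled_first[where Gam = Gam and y = y and y' = y0, OF False]
        by (simp add: F_def)
      have "K = (\<lambda>_. k0)"
        unfolding k0_def K_def fun_eq_iff by (intro allI nn_integral_cong) (rule F_const)
      then show ?thesis
        by (simp add: c_def False SQ.M.emeasure_space_1 SP.M.emeasure_space_1)
    qed
    have "(\<integral>\<^sup>+w. G w \<partial>?SQ) = (\<integral>\<^sup>+y. \<integral>\<^sup>+\<omega>. G (case_nat y \<omega>) \<partial>?SQ \<partial>Q)"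
      using G measurable_cong_sets[OF sets_SQ refl] by (intro SQ.nn_integral_case_nat) blast
    also have "\<dots> = (\<integral>\<^sup>+y. K y * ennreal (exp (c y)) \<partial>Q)"
      using inner sets_eq_imp_space_eq[OF sets_Q] by (intro nn_integral_cong) simp
    also have "\<dots> = (\<integral>\<^sup>+y. K y \<partial>P)"
      by (rule outer)
    also have "\<dots> = (\<integral>\<^sup>+w. F w \<partial>?SP)"
      unfolding K_def by (rule SP.nn_integral_case_nat[symmetric, OF F])
    finally show ?case
      by (simp add: F_def)
  qed
qed

lemma borel_measurable_num_samples:
  assumes "\<And>j. (\<lambda>w. sampled Gam w j) \<in> measurable M (count_space UNIV)"
  shows "num_samples Gam \<in> borel_measurable M"
  unfolding num_samples_def[abs_def] using assms by measurable

lemma num_samples_finite_imp_stops: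
  assumes "num_samples Gam w \<noteq> \<infinity>"
  shows "\<exists>T. \<forall>j\<ge>T. \<not> sampled Gam w j"
proof (rule ccontr)
  assume "\<not> (\<exists>T. \<forall>j\<ge>T. \<not> sampled Gam w j)"
  then have "infinite {j. sampled Gam w j}"
    using infinite_nat_iff_unbounded_le by auto
  moreover have "num_samples Gam w = (\<integral>\<^sup>+j. indicator {j. sampled Gam w j} j \<partial>count_space UNIV)"
    unfolding num_samples_def nn_integral_count_space_nat
    by (intro suminf_cong) (simp add: indicator_def)
  ultimately show False
    using assms by (simp add: emeasure_count_space)
qed

lemma nn_integral_num_samples:
  assumes "\<And>j. (\<lambda>w. sampled Gam w j) \<in> measurable M (count_space UNIV)"
  shows "(\<integral>\<^sup>+w. num_samples Gam w \<partial>M) = (\<Sum>j. emeasure M {w\<in>space M. sampled Gam w j})"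
proof -
  have [measurable]: "{w\<in>space M. sampled Gam w j} \<in> sets M" for j
    using assms by measurable
  have "(\<integral>\<^sup>+w. num_samples Gam w \<partial>M) = (\<integral>\<^sup>+w. (\<Sum>j. indicator {w\<in>space M. sampled Gam w j} w) \<partial>M)"
    by (auto simp: num_samples_def indicator_def intro!: nn_integral_cong suminf_cong)
  also have "\<dots> = (\<Sum>j. emeasure M {w\<in>space M. sampled Gam w j})"
    by (subst nn_integral_suminf) auto
  finally show ?thesis .
qed

lemma sum_prob_sampled_le:
  assumes M: "prob_space M" and "\<And>j. (\<lambda>w. sampled Gam w j) \<in> measurable M (count_space UNIV)"
    and "(\<integral>\<^sup>+w. num_samples Gam w \<partial>M) \<noteq> \<infinity>"
  shows "(\<Sum>j<T. measure M {w\<in>space M. sampled Gam w j}) \<le> enn2real (\<integral>\<^sup>+w. num_samples Gam w \<partial>M)"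
proof -
  interpret prob_space M by (rule M)
  have "ennreal (\<Sum>j<T. measure M {w\<in>space M. sampled Gam w j})
      = (\<Sum>j<T. emeasure M {w\<in>space M. sampled Gam w j})"
    by (simp add: emeasure_eq_measure)
  also have "\<dots> \<le> (\<integral>\<^sup>+w. num_samples Gam w \<partial>M)"
    unfolding nn_integral_num_samples[OF assms(2)] by (intro sum_le_suminf) auto
  finally have "enn2real (ennreal (\<Sum>j<T. measure M {w\<in>space M. sampled Gam w j}))
      \<le> enn2real (\<integral>\<^sup>+w. num_samples Gam w \<partial>M)"
    using assms(3) by (intro enn2real_mono) (auto simp: less_top)
  then show ?thesis
    by (simp add: sum_nonneg)
qed

lemma prob_stopped_tendsto:
  assumes M: "prob_space M"
    and samp: "\<And>j. (\<lambda>w. sampled Gam w j) \<in> measurable M (count_space UNIV)"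
    and A[measurable]: "A \<in> measurable M (count_space UNIV)"
    and finite_samples: "(\<integral>\<^sup>+w. num_samples Gam w \<partial>M) \<noteq> \<infinity>"
  shows "(\<lambda>T. measure M {w \<in> space M. (\<forall>j\<ge>T. \<not> sampled Gam w j) \<and> A w})
           \<longlonglongrightarrow> measure M {w \<in> space M. A w}"
proof -
  interpret prob_space M by (rule M)
  note [measurable] = samp
  define B where "B T = {w \<in> space M. (\<forall>j\<ge>T. \<not> sampled Gam w j) \<and> A w}" for T
  have [measurable]: "B T \<in> sets M" for T
    unfolding B_def by measurable
  have "AE w in M. num_samples Gam w \<noteq> \<infinity>"
    using finite_samples by (intro nn_integral_PInf_AE) (simp_all add: borel_measurable_num_samples)
  then have "AE w in M. w \<in> (\<Union>T. B T) \<longleftrightarrow> w \<in> {w \<in> space M. A w}"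
    by eventually_elim (auto simp: B_def intro: num_samples_finite_imp_stops)
  then have "measure M (\<Union>T. B T) = measure M {w \<in> space M. A w}"
    by (intro measure_eq_AE) auto
  moreover have "(\<lambda>T. measure M (B T)) \<longlonglongrightarrow> measure M (\<Union>T. B T)"
    by (intro finite_Lim_measure_incseq) (auto simp: incseq_def B_def)
  ultimately show ?thesis
    by (simp add: B_def)
qed

section \<open>The trade-off for a single coordinate\<close>

lemma one_sub_ln_sub_exp_div_le: "0 < t \<Longrightarrow> 1 - ln t - exp (- l) / t \<le> (l::real)"
  using ln_le_minus_one[of "exp (- l) / t"] by (simp add: ln_div)

lemma has_bochner_integral_likelihood_ratio:
  fixes P Q :: "'y measure" and L :: "'y \<Rightarrow> real"
  assumes P: "prob_space P" and Q: "prob_space Q"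
    and Q_eq: "Q = density P (\<lambda>y. ennreal (exp (- L y)))"
    and L[measurable]: "L \<in> borel_measurable P"
    and samp: "\<forall>j. (\<lambda>w. sampled Gam w j) \<in> measurable (PiM UNIV (\<lambda>_. P)) (count_space UNIV)"
    and A: "A \<in> measurable (PiM UNIV (\<lambda>_. P)) (count_space UNIV)" "prefix_determined Gam T A"
  shows "has_bochner_integral (PiM UNIV (\<lambda>_. P))
      (\<lambda>w. exp (- observed_llr L Gam T w) * indicator {w \<in> space (PiM UNIV (\<lambda>_. P)). A w} w)
      (measure (PiM UNIV (\<lambda>_. Q)) {w \<in> space (PiM UNIV (\<lambda>_. Q)). A w})"
proof -
  interpret SQ: sequence_space Q by (rule sequence_space_prob_space[OF Q])
  let ?SP = "PiM (UNIV::nat set) (\<lambda>_. P)" and ?SQ = "PiM (UNIV::nat set) (\<lambda>_. Q)"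
  note [measurable] = A(1) borel_measurable_observed_llr[OF samp L]
  have sets_SQ: "sets ?SQ = sets ?SP"
    by (rule sets_PiM_cong) (simp_all add: Q_eq)
  have "A \<in> measurable ?SQ (count_space UNIV)"
    unfolding measurable_cong_sets[OF sets_SQ refl] by (rule A(1))
  then have A_SQ: "{w \<in> space ?SQ. A w} \<in> sets ?SQ"
    by measurable
  have "(\<integral>\<^sup>+w. ennreal (exp (- observed_llr L Gam T w) * indicator {w \<in> space ?SP. A w} w) \<partial>?SP)
      = (\<integral>\<^sup>+w. (if A w then 1 else 0) * ennreal (exp (- observed_llr L Gam T w)) \<partial>?SP)"
    by (intro nn_integral_cong) (simp add: indicator_def)
  also have "\<dots> = (\<integral>\<^sup>+w. (if A w then 1 else 0) \<partial>?SQ)"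
    using prefix_determined_comp[OF A(2), of "\<lambda>b. if b then 1 else 0"]
    by (intro nn_integral_PiM_density_prefix_determined[OF P Q Q_eq L samp, symmetric]) simp_all
  also have "\<dots> = (\<integral>\<^sup>+w. indicator {w \<in> space ?SQ. A w} w \<partial>?SQ)"
    by (intro nn_integral_cong) (simp add: indicator_def)
  also have "\<dots> = ennreal (measure ?SQ {w \<in> space ?SQ. A w})"
    using A_SQ by (simp add: SQ.P.emeasure_eq_measure)
  finally show ?thesis
    by (intro has_bochner_integral_nn_integral) auto
qed

text \<open>Pointwise, 1 - ln t 1_B - exp (-l) + (1 - 1/t) exp (-l) 1_B \<le> l for the log-likelihood
  ratio l (this is ln x \<le> x - 1); integrating under P turns exp (-l) into the law Q.\<close>

lemma prefix_event_tradeoff: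
  fixes P Q :: "'y measure" and L :: "'y \<Rightarrow> real"
  assumes P: "prob_space P" and Q: "prob_space Q"
    and Q_eq: "Q = density P (\<lambda>y. ennreal (exp (- L y)))"
    and L: "integrable P L"
    and samp: "\<forall>j. (\<lambda>w. sampled Gam w j) \<in> measurable (PiM UNIV (\<lambda>_. P)) (count_space UNIV)"
    and A: "A \<in> measurable (PiM UNIV (\<lambda>_. P)) (count_space UNIV)" "prefix_determined Gam T A"
    and t: "0 < t"
  shows "measure (PiM UNIV (\<lambda>_. Q)) {w \<in> space (PiM UNIV (\<lambda>_. Q)). A w} * (1 - 1/t)
           - measure (PiM UNIV (\<lambda>_. P)) {w \<in> space (PiM UNIV (\<lambda>_. P)). A w} * ln t
         \<le> (\<Sum>j<T. measure (PiM UNIV (\<lambda>_. P)) {w\<in>space (PiM UNIV (\<lambda>_. P)). sampled Gam w j})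
             * (\<integral>y. L y \<partial>P)"
proof -
  interpret SP: sequence_space P by (rule sequence_space_prob_space[OF P])
  interpret SQ: sequence_space Q by (rule sequence_space_prob_space[OF Q])
  let ?SP = "PiM (UNIV::nat set) (\<lambda>_. P)" and ?SQ = "PiM (UNIV::nat set) (\<lambda>_. Q)"
  note ratio = has_bochner_integral_likelihood_ratio[OF P Q Q_eq borel_measurable_integrable[OF L] samp]
  define lr where "lr = observed_llr L Gam T"
  define E where "E w = exp (- lr w)" for w
  define B where "B = {w \<in> space ?SP. A w}"
  have "has_bochner_integral ?SP E 1"
    using ratio[of "\<lambda>_. True" T] by (simp add: E_def lr_def prefix_determined_def SQ.P.prob_space
        cong: has_bochner_integral_cong)
  then have E: "integrable ?SP E" "(\<integral>w. E w \<partial>?SP) = 1"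
    by (simp_all add: has_bochner_integral_iff)
  have EB: "integrable ?SP (\<lambda>w. E w * indicator B w)"
      "(\<integral>w. E w * indicator B w \<partial>?SP) = measure ?SQ {w \<in> space ?SQ. A w}"
    using ratio[OF A] by (simp_all add: E_def lr_def B_def has_bochner_integral_iff)
  have IB: "integrable ?SP (indicator B :: _ \<Rightarrow> real)" "(\<integral>w. indicator B w \<partial>?SP) = measure ?SP B"
    using A(1) by (simp_all add: B_def SP.P.emeasure_eq_measure)
  define R where "R w = 1 - ln t * indicator B w - E w + (1 - 1/t) * (E w * indicator B w)" for w
  have "R w \<le> lr w" for w
    using one_sub_ln_sub_exp_div_le[OF t, of "lr w"] one_sub_ln_sub_exp_div_le[of 1 "lr w"]
    by (cases "w \<in> B") (simp_all add: R_def E_def field_simps)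
  then have "(\<integral>w. R w \<partial>?SP) \<le> (\<integral>w. lr w \<partial>?SP)"
    unfolding R_def lr_def using E EB IB SP.integral_observed_llr(1)[OF samp L]
    by (intro integral_mono) auto
  moreover have "(\<integral>w. R w \<partial>?SP) = measure ?SQ {w \<in> space ?SQ. A w} * (1 - 1/t) - measure ?SP B * ln t"
    unfolding R_def using E EB IB by (simp add: SP.P.prob_space algebra_simps)
  ultimately show ?thesis
    using SP.integral_observed_llr(2)[OF samp L] by (simp add: lr_def B_def)
qed

text \<open>Let the horizon T of prefix_event_tradeoff grow along the events "stopped by T and
  A": they increase to the event A since the rule stops almost surely, and on the Q side
  their probabilities may be replaced by Q(A) because 1 - 1/t \<le> 0.\<close>

lemma decision_tradeoff:
  fixes P Q :: "'y measure" and L :: "'y \<Rightarrow> real"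
  assumes P: "prob_space P" and Q: "prob_space Q"
    and Q_eq: "Q = density P (\<lambda>y. ennreal (exp (- L y)))"
    and L: "integrable P L"
    and samp: "\<forall>j. (\<lambda>w. sampled Gam w j) \<in> measurable (PiM UNIV (\<lambda>_. P)) (count_space UNIV)"
    and A: "(\<lambda>w. A (observed Gam w)) \<in> measurable (PiM UNIV (\<lambda>_. P)) (count_space UNIV)"
    and finite_samples: "(\<integral>\<^sup>+w. num_samples Gam w \<partial>PiM UNIV (\<lambda>_. P)) \<noteq> \<infinity>"
    and D: "0 \<le> D" "(\<integral>y. L y \<partial>P) \<le> D"
    and t: "0 < t" "t \<le> 1"
  shows "measure (PiM UNIV (\<lambda>_. Q)) {w \<in> space (PiM UNIV (\<lambda>_. Q)). A (observed Gam w)} * (1 - 1/t)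
           - measure (PiM UNIV (\<lambda>_. P)) {w \<in> space (PiM UNIV (\<lambda>_. P)). A (observed Gam w)} * ln t
         \<le> enn2real (\<integral>\<^sup>+w. num_samples Gam w \<partial>PiM UNIV (\<lambda>_. P)) * D"
proof -
  interpret SP: sequence_space P by (rule sequence_space_prob_space[OF P])
  interpret SQ: sequence_space Q by (rule sequence_space_prob_space[OF Q])
  let ?SP = "PiM (UNIV::nat set) (\<lambda>_. P)" and ?SQ = "PiM (UNIV::nat set) (\<lambda>_. Q)"
  have sets_SQ: "sets ?SQ = sets ?SP"
    by (rule sets_PiM_cong) (simp_all add: Q_eq)
  have space_SQ: "space ?SQ = space ?SP"
    using sets_eq_imp_space_eq[OF sets_SQ] .
  have [measurable]: "(\<lambda>w. sampled Gam w j) \<in> measurable ?SP (count_space UNIV)" for j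
    using samp by blast
  note [measurable] = A
  define a where "a = enn2real (\<integral>\<^sup>+w. num_samples Gam w \<partial>?SP)"
  define C where "C = {w \<in> space ?SP. A (observed Gam w)}"
  define B where "B T = {w \<in> space ?SP. (\<forall>j\<ge>T. \<not> sampled Gam w j) \<and> A (observed Gam w)}" for T
  have [measurable]: "C \<in> sets ?SP" "B T \<in> sets ?SP" for T
    unfolding B_def C_def by measurable
  have "measure ?SQ C * (1 - 1/t) - measure ?SP (B T) * ln t \<le> a * D" for T
  proof -
    have "measure ?SQ C * (1 - 1/t) \<le> measure ?SQ (B T) * (1 - 1/t)"
      using t sets_SQ by (intro mult_right_mono_neg SQ.P.finite_measure_mono)
        (auto simp: B_def C_def field_simps)
    also have "measure ?SQ (B T) * (1 - 1/t) - measure ?SP (B T) * ln t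
        \<le> (\<Sum>j<T. measure ?SP {w\<in>space ?SP. sampled Gam w j}) * (\<integral>y. L y \<partial>P)"
    proof -
      have "(\<lambda>w. (\<forall>j\<ge>T. \<not> sampled Gam w j) \<and> A (observed Gam w)) \<in> measurable ?SP (count_space UNIV)"
        by measurable
      from prefix_event_tradeoff[OF P Q Q_eq L samp this prefix_determined_stopped t(1)]
      show ?thesis
        by (simp only: B_def space_SQ)
    qed
    also have "\<dots> \<le> (\<Sum>j<T. measure ?SP {w\<in>space ?SP. sampled Gam w j}) * D"
      using D by (intro mult_left_mono sum_nonneg) auto
    also have "\<dots> \<le> a * D"
      unfolding a_def using D sum_prob_sampled_le[OF SP.P.prob_space_axioms _ finite_samples]
      by (intro mult_right_mono) auto
    finally show ?thesis
      by linarith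
  qed
  moreover have "(\<lambda>T. measure ?SP (B T)) \<longlonglongrightarrow> measure ?SP C"
    unfolding B_def C_def
    by (rule prob_stopped_tendsto[OF SP.P.prob_space_axioms _ A finite_samples]) simp
  ultimately have "measure ?SQ C * (1 - 1/t) - measure ?SP C * ln t \<le> a * D"
    by (intro LIMSEQ_le_const2[OF tendsto_diff[OF tendsto_const tendsto_mult_right]]) auto
  then show ?thesis
    by (simp add: C_def a_def space_SQ)
qed

lemma measurable_PiM_density_iff:
  "measurable (PiM I (\<lambda>_. density M f)) N = measurable (PiM I (\<lambda>_. M)) N"
  by (intro measurable_cong_sets sets_PiM_cong) auto

lemma density_eq_density_log_ratio:
  fixes f g :: "'y \<Rightarrow> real"
  assumes [measurable]: "f \<in> borel_measurable mu" "g \<in> borel_measurable mu"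
    and nonneg: "\<forall>y\<in>space mu. 0 \<le> f y" "\<forall>y\<in>space mu. 0 \<le> g y"
    and support: "\<forall>y\<in>space mu. 0 < f y \<longleftrightarrow> 0 < g y"
  shows "density mu g = density (density mu f) (\<lambda>y. ennreal (exp (- ln (f y / g y))))"
proof -
  have "ennreal (g y) = ennreal (f y) * ennreal (exp (- ln (f y / g y)))" if y: "y \<in> space mu" for y
  proof (cases "0 < f y")
    case True
    then have "0 < g y"
      using support y by blast
    with True show ?thesis
      by (simp add: ennreal_mult[symmetric] ln_div exp_diff)
  next
    case False
    then show ?thesis
      using support nonneg y by (metis ennreal_0 mult_zero_left order_less_le)
  qed
  then show ?thesis
    by (subst density_density_eq) (auto intro!: density_cong AE_I2)
qed

lemma nn_integral_sample_space_sum: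
  fixes F :: "(nat \<Rightarrow> 'y) \<Rightarrow> ennreal"
  assumes P0: "prob_space P0" and P1: "prob_space P1" and S: "S \<subseteq> {1..n}"
    and F0: "F \<in> borel_measurable (PiM UNIV (\<lambda>_. P0))"
    and F1: "F \<in> borel_measurable (PiM UNIV (\<lambda>_. P1))"
  shows "(\<integral>\<^sup>+w. (\<Sum>i\<in>{1..n}. F (w i)) \<partial>sample_space n S P0 P1)
    = of_nat (n - card S) * (\<integral>\<^sup>+w. F w \<partial>PiM UNIV (\<lambda>_. P0))
      + of_nat (card S) * (\<integral>\<^sup>+w. F w \<partial>PiM UNIV (\<lambda>_. P1))"
proof -
  define M where "M i = PiM (UNIV :: nat set) (\<lambda>_. if i \<in> S then P1 else P0)" for i
  have M: "M i = (if i \<in> S then PiM UNIV (\<lambda>_. P1) else PiM UNIV (\<lambda>_. P0))" for i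
    by (simp add: M_def)
  have prob_M: "prob_space (M i)" for i
    unfolding M using P0 P1 by (simp add: prob_space_PiM)
  have F: "F \<in> borel_measurable (M i)" for i
    unfolding M using F0 F1 by simp
  have "sample_space n S P0 P1 = PiM {1..n} M"
    unfolding sample_space_def M_def ..
  then have "(\<integral>\<^sup>+w. (\<Sum>i\<in>{1..n}. F (w i)) \<partial>sample_space n S P0 P1)
      = (\<Sum>i\<in>{1..n}. \<integral>\<^sup>+w. F (w i) \<partial>PiM {1..n} M)"
    using F by (simp only:) (intro nn_integral_sum, auto intro: measurable_compose[OF measurable_component_singleton])
  also have "\<dots> = (\<Sum>i\<in>{1..n}. \<integral>\<^sup>+w. F w \<partial>M i)"
  proof (intro sum.cong refl)
    fix i assume i: "i \<in> {1..n}"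
    have "(\<integral>\<^sup>+w. F (w i) \<partial>PiM {1..n} M) = (\<integral>\<^sup>+w. F w \<partial>distr (PiM {1..n} M) (M i) (\<lambda>w. w i))"
      using i F by (subst nn_integral_distr) (auto intro: measurable_component_singleton)
    then show "(\<integral>\<^sup>+w. F (w i) \<partial>PiM {1..n} M) = (\<integral>\<^sup>+w. F w \<partial>M i)"
      using i prob_M by (simp add: distr_PiM_component)
  qed
  also have "\<dots> = of_nat (card S) * (\<integral>\<^sup>+w. F w \<partial>PiM UNIV (\<lambda>_. P1))
      + of_nat (card ({1..n} - S)) * (\<integral>\<^sup>+w. F w \<partial>PiM UNIV (\<lambda>_. P0))"
    using S by (simp add: M if_distrib[where f = "\<lambda>N. integral\<^sup>N N F"] sum.If_cases Int_absorb1 Diff_eq)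
  also have "card ({1..n} - S) = n - card S"
    using S by (simp add: card_Diff_subset finite_subset)
  finally show ?thesis
    by (metis add.commute)
qed

lemma est_support_eq_iff:
  "S \<subseteq> {1..n} \<Longrightarrow> est_support n Gam dec w = S \<longleftrightarrow> (\<forall>i\<in>{1..n}. dec (observed Gam (w i)) = (i \<in> S))"
  unfolding est_support_def by blast

lemma prob_est_support_ne:
  assumes P0: "prob_space P0" and P1: "prob_space P1" and S: "S \<subseteq> {1..n}"
    and dec0: "(\<lambda>w. dec (observed Gam w)) \<in> measurable (PiM UNIV (\<lambda>_. P0)) (count_space UNIV)"
    and dec1: "(\<lambda>w. dec (observed Gam w)) \<in> measurable (PiM UNIV (\<lambda>_. P1)) (count_space UNIV)"
  shows "measure (sample_space n S P0 P1)
      {w \<in> space (sample_space n S P0 P1). est_support n Gam dec w \<noteq> S}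
    = 1 - measure (PiM UNIV (\<lambda>_. P0)) {w \<in> space (PiM UNIV (\<lambda>_. P0)). \<not> dec (observed Gam w)} ^ (n - card S)
        * measure (PiM UNIV (\<lambda>_. P1)) {w \<in> space (PiM UNIV (\<lambda>_. P1)). dec (observed Gam w)} ^ card S"
proof -
  define M where "M i = PiM (UNIV :: nat set) (\<lambda>_. if i \<in> S then P1 else P0)" for i
  have M: "M i = (if i \<in> S then PiM UNIV (\<lambda>_. P1) else PiM UNIV (\<lambda>_. P0))" for i
    by (simp add: M_def)
  have prob_M: "prob_space (M i)" for i
    unfolding M using P0 P1 by (simp add: prob_space_PiM)
  interpret finite_product_prob_space M "{1..n}"
    by (intro finite_product_prob_space.intro finite_product_sigma_finite.intro
        product_prob_space.intro product_sigma_finite.intro product_prob_space_axioms.intro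
        finite_product_sigma_finite_axioms.intro)
      (auto simp: prob_M prob_space_imp_sigma_finite)
  define A where "A i = {x \<in> space (M i). dec (observed Gam x) = (i \<in> S)}" for i
  have A: "A i \<in> sets (M i)" for i
    unfolding A_def M using dec0 dec1 by (auto intro: measurable_sets)
  have "w \<in> PiE {1..n} A \<longleftrightarrow> est_support n Gam dec w = S" if w: "w \<in> space (PiM {1..n} M)" for w
  proof -
    have "w \<in> extensional {1..n}" "\<forall>i\<in>{1..n}. w i \<in> space (M i)"
      using w by (simp_all add: space_PiM PiE_iff)
    then have "w \<in> PiE {1..n} A \<longleftrightarrow> (\<forall>i\<in>{1..n}. dec (observed Gam (w i)) = (i \<in> S))"
      by (auto simp: PiE_iff A_def)
    then show ?thesis
      using est_support_eq_iff[OF S] by blast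
  qed
  then have error_event:
    "{w \<in> space (PiM {1..n} M). est_support n Gam dec w \<noteq> S} = space (PiM {1..n} M) - PiE {1..n} A"
    by blast
  define p where "p = measure (PiM UNIV (\<lambda>_. P0)) {w \<in> space (PiM UNIV (\<lambda>_. P0)). \<not> dec (observed Gam w)}"
  define q where "q = measure (PiM UNIV (\<lambda>_. P1)) {w \<in> space (PiM UNIV (\<lambda>_. P1)). dec (observed Gam w)}"
  have "measure (PiM {1..n} M) (PiE {1..n} A) = (\<Prod>i\<in>{1..n}. measure (M i) (A i))"
    using A by (intro finite_measure_PiM_emb) auto
  also have "\<dots> = (\<Prod>i\<in>{1..n}. if i \<in> S then q else p)"
    by (intro prod.cong refl) (simp add: A_def M p_def q_def)
  also have "\<dots> = p ^ (n - card S) * q ^ card S"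
    using S by (simp add: prod.If_cases Int_absorb1 Diff_eq[symmetric] card_Diff_subset finite_subset)
  finally have "measure (PiM {1..n} M) {w \<in> space (PiM {1..n} M). est_support n Gam dec w \<noteq> S}
      = 1 - p ^ (n - card S) * q ^ card S"
    unfolding error_event using prob_compl[of "PiE {1..n} A"] A by simp
  moreover have "sample_space n S P0 P1 = PiM {1..n} M"
    unfolding sample_space_def M_def ..
  ultimately show ?thesis
    unfolding p_def q_def by simp
qed

lemma (in prob_space) prob_Collect_not:
  assumes "A \<in> measurable M (count_space UNIV)"
  shows "prob {x \<in> space M. \<not> A x} = 1 - prob {x \<in> space M. A x}"
proof -
  have "{x \<in> space M. A x} \<in> events"
    using assms by measurable
  moreover have "space M - {x \<in> space M. A x} = {x \<in> space M. \<not> A x}"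
    by blast
  ultimately show ?thesis
    using prob_compl by metis
qed

lemma finite_weighted_sum_le_ennreal:
  fixes a b :: ennreal
  assumes le: "of_nat k * a + of_nat l * b \<le> ennreal c" and "1 \<le> k" "1 \<le> l" "0 \<le> c"
  shows "a \<noteq> \<infinity>" "b \<noteq> \<infinity>" "real k * enn2real a + real l * enn2real b \<le> c"
proof -
  show a: "a \<noteq> \<infinity>" and b: "b \<noteq> \<infinity>"
    using le assms(2,3) by (auto simp: ennreal_mult_eq_top_iff top_unique)
  have "ennreal (real k * enn2real a + real l * enn2real b) = of_nat k * a + of_nat l * b"
    using a b by (simp add: ennreal_plus ennreal_mult' ennreal_of_nat_eq_real_of_nat less_top)
  from ord_eq_le_trans[OF this le] show "real k * enn2real a + real l * enn2real b \<le> c"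
    using ennreal_le_iff[OF assms(4)] by blast
qed

lemma expected_samples_budget:
  assumes P0: "prob_space P0" and P1: "prob_space P1"
    and S: "S \<subseteq> {1..n}" "card S = s" "1 \<le> s" "real s \<le> real n / 2" and m: "0 \<le> m"
    and samp0: "\<And>j. (\<lambda>w. sampled Gam w j) \<in> measurable (PiM UNIV (\<lambda>_. P0)) (count_space UNIV)"
    and samp1: "\<And>j. (\<lambda>w. sampled Gam w j) \<in> measurable (PiM UNIV (\<lambda>_. P1)) (count_space UNIV)"
    and budget: "(\<integral>\<^sup>+w. (\<Sum>i\<in>{1..n}. num_samples Gam (w i)) \<partial>sample_space n S P0 P1) \<le> ennreal (real n * m)"
  shows "(\<integral>\<^sup>+w. num_samples Gam w \<partial>PiM UNIV (\<lambda>_. P0)) \<noteq> \<infinity>"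
    and "(\<integral>\<^sup>+w. num_samples Gam w \<partial>PiM UNIV (\<lambda>_. P1)) \<noteq> \<infinity>"
    and "real (n - s) * enn2real (\<integral>\<^sup>+w. num_samples Gam w \<partial>PiM UNIV (\<lambda>_. P0))
         + real s * enn2real (\<integral>\<^sup>+w. num_samples Gam w \<partial>PiM UNIV (\<lambda>_. P1)) \<le> real n * m"
proof -
  have "of_nat (n - s) * (\<integral>\<^sup>+w. num_samples Gam w \<partial>PiM UNIV (\<lambda>_. P0))
      + of_nat s * (\<integral>\<^sup>+w. num_samples Gam w \<partial>PiM UNIV (\<lambda>_. P1)) \<le> ennreal (real n * m)"
    using budget nn_integral_sample_space_sum[OF P0 P1 S(1)] S(2) samp0 samp1
    by (simp add: borel_measurable_num_samples)
  from finite_weighted_sum_le_ennreal[OF this] S(3,4) m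
  show "(\<integral>\<^sup>+w. num_samples Gam w \<partial>PiM UNIV (\<lambda>_. P0)) \<noteq> \<infinity>"
    and "(\<integral>\<^sup>+w. num_samples Gam w \<partial>PiM UNIV (\<lambda>_. P1)) \<noteq> \<infinity>"
    and "real (n - s) * enn2real (\<integral>\<^sup>+w. num_samples Gam w \<partial>PiM UNIV (\<lambda>_. P0))
         + real s * enn2real (\<integral>\<^sup>+w. num_samples Gam w \<partial>PiM UNIV (\<lambda>_. P1)) \<le> real n * m"
    by simp_all
qed

lemma density_decision_tradeoff:
  fixes f g :: "'y \<Rightarrow> real"
  assumes [measurable]: "f \<in> borel_measurable mu" "g \<in> borel_measurable mu"
    and nonneg: "\<forall>y\<in>space mu. 0 \<le> f y" "\<forall>y\<in>space mu. 0 \<le> g y"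
    and support: "\<forall>y\<in>space mu. 0 < f y \<longleftrightarrow> 0 < g y"
    and P: "prob_space (density mu f)" and Q: "prob_space (density mu g)"
    and L: "integrable (density mu f) (\<lambda>y. ln (f y / g y))"
    and samp: "\<forall>j. (\<lambda>w. sampled Gam w j) \<in> measurable (PiM UNIV (\<lambda>_. mu)) (count_space UNIV)"
    and A: "(\<lambda>w. A (observed Gam w)) \<in> measurable (PiM UNIV (\<lambda>_. mu)) (count_space UNIV)"
    and finite_samples: "(\<integral>\<^sup>+w. num_samples Gam w \<partial>PiM UNIV (\<lambda>_. density mu f)) \<noteq> \<infinity>"
    and D: "0 \<le> D" "KL_dens mu f g \<le> D"
    and t: "0 < t" "t \<le> 1"
  shows "measure (PiM UNIV (\<lambda>_. density mu g))
             {w \<in> space (PiM UNIV (\<lambda>_. density mu g)). A (observed Gam w)} * (1 - 1/t)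
           - measure (PiM UNIV (\<lambda>_. density mu f))
             {w \<in> space (PiM UNIV (\<lambda>_. density mu f)). A (observed Gam w)} * ln t
         \<le> enn2real (\<integral>\<^sup>+w. num_samples Gam w \<partial>PiM UNIV (\<lambda>_. density mu f)) * D"
  using decision_tradeoff[OF P Q density_eq_density_log_ratio[OF assms(1-5)] L _ _ finite_samples
      D(1) _ t] samp A D(2)
  by (simp add: measurable_PiM_density_iff KL_dens_def)

lemma ln_le_half_self: "0 < (y::real) \<Longrightarrow> ln y \<le> y / 2"
  using ln_le_minus_one[of "y / 2"] ln_2_less_1 by (simp add: ln_div)

lemma defects_lt_of_exp_lt_pow:
  fixes p q \<delta> :: real
  assumes "0 \<le> p" "p \<le> 1" "0 \<le> q" "q \<le> 1" and gt: "exp (- \<delta>) < p ^ k * q ^ s"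
  shows "real k * (1 - p) + real s * (1 - q) < \<delta>"
proof -
  have "p ^ k * q ^ s \<le> exp (- (1 - p)) ^ k * exp (- (1 - q)) ^ s"
    using assms exp_ge_add_one_self[of "p - 1"] exp_ge_add_one_self[of "q - 1"]
    by (intro mult_mono power_mono) auto
  also have "\<dots> = exp (- (real k * (1 - p) + real s * (1 - q)))"
    by (simp add: exp_of_nat_mult[symmetric] exp_add[symmetric] algebra_simps)
  finally have "exp (- \<delta>) < exp (- (real k * (1 - p) + real s * (1 - q)))"
    using gt by linarith
  then show ?thesis
    by simp
qed

lemma tradeoff_lower_bound:
  fixes \<beta> p A c \<delta> :: real
  assumes tradeoff: "\<And>t. 0 < t \<Longrightarrow> t \<le> 1 \<Longrightarrow> \<beta> * (1 - 1/t) - p * ln t \<le> A"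
    and "0 \<le> \<beta>" "0 < \<delta>" "\<delta> \<le> c" "c * \<beta> < \<delta>"
  shows "p * ln (c / \<delta>) - 1 < A"
proof -
  have "\<beta> * (1 - 1 / (\<delta> / c)) - p * ln (\<delta> / c) \<le> A"
    using assms by (intro tradeoff) auto
  moreover have "\<beta> * (1 - 1 / (\<delta> / c)) = \<beta> - c * \<beta> / \<delta>"
    using assms by (simp add: field_simps)
  moreover have "ln (\<delta> / c) = - ln (c / \<delta>)"
    using assms by (simp add: ln_div)
  ultimately have "\<beta> - c * \<beta> / \<delta> + p * ln (c / \<delta>) \<le> A"
    by simp
  moreover have "c * \<beta> / \<delta> < 1"
    using assms by (simp add: field_simps)
  ultimately show ?thesis
    using assms(2) by linarith
qed

text \<open>Total correctness defect below \<delta> forces each coordinate type to spend a budget of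
  order ln (s / \<delta>) per coordinate.\<close>

lemma weighted_tradeoffs_lower_bound:
  fixes k s :: nat and p0 q1 A0 A1 \<delta> :: real
  assumes s: "1 \<le> s" "s \<le> k" and \<delta>: "0 < \<delta>" "\<delta> \<le> real s"
    and p0: "0 \<le> p0" "p0 \<le> 1" and q1: "0 \<le> q1" "q1 \<le> 1"
    and defect_sum: "real k * (1 - p0) + real s * (1 - q1) < \<delta>"
    and tradeoff0: "\<And>t. 0 < t \<Longrightarrow> t \<le> 1 \<Longrightarrow> (1 - q1) * (1 - 1/t) - p0 * ln t \<le> A0"
    and tradeoff1: "\<And>t. 0 < t \<Longrightarrow> t \<le> 1 \<Longrightarrow> (1 - p0) * (1 - 1/t) - q1 * ln t \<le> A1"
  shows "(real k + real s - \<delta>) * ln (real s / \<delta>) - (real k + real s) < real k * A0 + real s * A1"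
proof -
  define Lg where "Lg = ln (real s / \<delta>)"
  have Lg_nonneg: "0 \<le> Lg"
    using \<delta> by (simp add: Lg_def)
  have "0 \<le> real k * (1 - p0)" "0 \<le> real s * (1 - q1)"
    using p0 q1 by simp_all
  then have defects: "real k * (1 - p0) < \<delta>" "real s * (1 - q1) < \<delta>"
    using defect_sum by linarith+
  have A0: "p0 * Lg - 1 < A0"
    unfolding Lg_def using q1 \<delta> defects(2) by (intro tradeoff_lower_bound[OF tradeoff0]) auto
  have "q1 * Lg - 1 \<le> q1 * ln (real k / \<delta>) - 1"
    unfolding Lg_def using q1 \<delta> s by (intro diff_right_mono mult_left_mono) (auto simp: divide_right_mono)
  also have "\<dots> < A1"
    using p0 \<delta> s defects(1) by (intro tradeoff_lower_bound[OF tradeoff1]) auto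
  finally have A1: "q1 * Lg - 1 < A1" .
  have "(real k + real s - \<delta>) * Lg - (real k + real s)
      \<le> (real k + real s - real k * (1 - p0) - real s * (1 - q1)) * Lg - (real k + real s)"
    using defect_sum Lg_nonneg by (intro diff_right_mono mult_right_mono) auto
  also have "\<dots> = real k * (p0 * Lg - 1) + real s * (q1 * Lg - 1)"
    by (simp add: algebra_simps)
  also have "\<dots> < real k * A0 + real s * A1"
    using A0 A1 s by (intro add_strict_mono mult_strict_left_mono) auto
  finally show ?thesis
    by (simp add: Lg_def)
qed

lemma support_error_arith:
  fixes n s :: nat and p0 q1 a0 a1 D m \<delta> :: real
  assumes s: "1 \<le> s" "real s \<le> real n / 2" and \<delta>: "0 < \<delta>" and D: "0 < D"
    and m: "0 \<le> m" "m \<le> (ln (real s) + ln (1 / (4 * \<delta>))) / D"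
    and p0: "0 \<le> p0" "p0 \<le> 1" and q1: "0 \<le> q1" "q1 \<le> 1"
    and budget: "real (n - s) * a0 + real s * a1 \<le> real n * m"
    and tradeoff0: "\<And>t. 0 < t \<Longrightarrow> t \<le> 1 \<Longrightarrow> (1 - q1) * (1 - 1/t) - p0 * ln t \<le> a0 * D"
    and tradeoff1: "\<And>t. 0 < t \<Longrightarrow> t \<le> 1 \<Longrightarrow> (1 - p0) * (1 - 1/t) - q1 * ln t \<le> a1 * D"
  shows "1 - exp (- \<delta>) \<le> 1 - p0 ^ (n - s) * q1 ^ s"
proof (rule ccontr)
  define Lg where "Lg = ln (real s / \<delta>)"
  have n: "real (n - s) + real s = real n" "s \<le> n - s"
    using s by (simp_all add: of_nat_diff)
  have mD: "m * D \<le> Lg - ln 4"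
    using m D \<delta> s by (simp add: field_simps Lg_def ln_div ln_mult)
  moreover have "0 \<le> m * D"
    using m D by simp
  ultimately have "ln 4 \<le> Lg"
    by linarith
  then have "4 * \<delta> \<le> real s"
    using \<delta> s by (simp add: Lg_def ln_le_cancel_iff field_simps)
  assume "\<not> ?thesis"
  then have "real (n - s) * (1 - p0) + real s * (1 - q1) < \<delta>"
    using p0 q1 by (intro defects_lt_of_exp_lt_pow) auto
  from weighted_tradeoffs_lower_bound[OF s(1) n(2) \<delta> _ p0 q1 this tradeoff0 tradeoff1]
  have "(real n - \<delta>) * Lg - real n < (real (n - s) * a0 + real s * a1) * D"
    using \<open>4 * \<delta> \<le> real s\<close> n(1) by (simp add: Lg_def algebra_simps)
  also have "\<dots> \<le> real n * (m * D)"
    using mult_right_mono[OF budget, of D] D by simp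
  also have "\<dots> \<le> real n * (Lg - ln 4)"
    using mD by (intro mult_left_mono) auto
  finally have "real n * (ln 4 - 1) < \<delta> * Lg"
    by (simp add: algebra_simps)
  also have "\<delta> * Lg \<le> real s / 2"
    using ln_le_half_self[of "real s / \<delta>"] \<delta> s by (simp add: Lg_def field_simps)
  finally have "real n * (ln 4 - 1) < real n / 4"
    using s by linarith
  moreover have "1/3 \<le> ln (4::real) - 1"
    using ln2_ge_two_thirds ln_realpow[of 2 2] by simp
  then have "real n * (1/3) \<le> real n * (ln 4 - 1)"
    by (intro mult_left_mono) auto
  ultimately show False
    using s by linarith
qed

theorem theorem1:
  fixes n s :: nat and S :: "nat set"
    and mu :: "'y measure" and f0 f1 :: "'y \<Rightarrow> real"
    and Gam :: "'y option list \<Rightarrow> bool" and dec :: "(nat \<Rightarrow> 'y option) \<Rightarrow> bool"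
    and m \<delta> :: real
  assumes n2: "n \<ge> 2"
    and S_sub: "S \<subseteq> {1..n}" and S_card: "card S = s"
    and s_pos: "1 \<le> s" and s_half: "real s \<le> real n / 2"
    and f0_meas: "f0 \<in> borel_measurable mu" and f1_meas: "f1 \<in> borel_measurable mu"
    and f0_nn: "\<forall>y\<in>space mu. f0 y \<ge> 0" and f1_nn: "\<forall>y\<in>space mu. f1 y \<ge> 0"
    and P0_prob: "prob_space (density mu f0)" and P1_prob: "prob_space (density mu f1)"
    and common_support: "\<forall>y\<in>space mu. f0 y > 0 \<longleftrightarrow> f1 y > 0"
    and P_ne: "density mu f0 \<noteq> density mu f1"
    and int01: "integrable (density mu f0) (\<lambda>y. ln (f0 y / f1 y))"
    and int10: "integrable (density mu f1) (\<lambda>y. ln (f1 y / f0 y))"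
    and DKL_pos: "max (KL_dens mu f0 f1) (KL_dens mu f1 f0) > 0"
    and delta_pos: "\<delta> > 0"
    and Gam_meas: "\<forall>j. (\<lambda>w. sampled Gam w j)
                       \<in> measurable (PiM (UNIV :: nat set) (\<lambda>_. mu)) (count_space UNIV)"
    and dec_meas: "(\<lambda>w. dec (observed Gam w))
                       \<in> measurable (PiM (UNIV :: nat set) (\<lambda>_. mu)) (count_space UNIV)"
    and m_nonneg: "m \<ge> 0"
    and budget: "(\<integral>\<^sup>+ w. (\<Sum>i\<in>{1..n}. num_samples Gam (w i))
                    \<partial>(sample_space n S (density mu f0) (density mu f1)))
                 \<le> ennreal (real n * m)"
    and m_bound: "m \<le> (ln (real s) + ln (1 / (4 * \<delta>)))
                        / max (KL_dens mu f0 f1) (KL_dens mu f1 f0)"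
  shows "measure (sample_space n S (density mu f0) (density mu f1))
           {w \<in> space (sample_space n S (density mu f0) (density mu f1)).
              est_support n Gam dec w \<noteq> S}
         \<ge> 1 - exp (- \<delta>)"
proof -
  let ?S0 = "PiM (UNIV :: nat set) (\<lambda>_. density mu f0)"
    and ?S1 = "PiM (UNIV :: nat set) (\<lambda>_. density mu f1)"
  define D where "D = max (KL_dens mu f0 f1) (KL_dens mu f1 f0)"
  define p0 where "p0 = measure ?S0 {w \<in> space ?S0. \<not> dec (observed Gam w)}"
  define q1 where "q1 = measure ?S1 {w \<in> space ?S1. dec (observed Gam w)}"
  have samp: "\<And>j. (\<lambda>w. sampled Gam w j) \<in> measurable (PiM UNIV (\<lambda>_. density mu f)) (count_space UNIV)"
    and dec: "(\<lambda>w. dec (observed Gam w)) \<in> measurable (PiM UNIV (\<lambda>_. density mu f)) (count_space UNIV)"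
    for f using Gam_meas dec_meas by (simp_all add: measurable_PiM_density_iff)
  note samples = expected_samples_budget[OF P0_prob P1_prob S_sub S_card s_pos s_half m_nonneg
      samp samp budget]
  have D: "0 < D" "KL_dens mu f0 f1 \<le> D" "KL_dens mu f1 f0 \<le> D"
    using DKL_pos by (simp_all add: D_def)
  have compl: "measure ?S0 {w \<in> space ?S0. dec (observed Gam w)} = 1 - p0"
    "measure ?S1 {w \<in> space ?S1. \<not> dec (observed Gam w)} = 1 - q1"
    unfolding p0_def q1_def using prob_space.prob_Collect_not[OF prob_space_PiM dec] P0_prob P1_prob
    by simp_all
  have tradeoff0: "(1 - q1) * (1 - 1/t) - p0 * ln t
      \<le> enn2real (\<integral>\<^sup>+w. num_samples Gam w \<partial>?S0) * D" if "0 < t" "t \<le> 1" for t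
    using density_decision_tradeoff[where A = "\<lambda>r. \<not> dec r", OF f0_meas f1_meas f0_nn f1_nn
        common_support P0_prob P1_prob int01 Gam_meas _ samples(1) _ D(2) that] dec_meas D(1) compl
    by (simp add: p0_def)
  have tradeoff1: "(1 - p0) * (1 - 1/t) - q1 * ln t
      \<le> enn2real (\<integral>\<^sup>+w. num_samples Gam w \<partial>?S1) * D" if "0 < t" "t \<le> 1" for t
    using density_decision_tradeoff[where A = dec, OF f1_meas f0_meas f1_nn f0_nn _ P1_prob P0_prob
        int10 Gam_meas dec_meas samples(2) _ D(3) that] common_support D(1) compl
    by (auto simp: q1_def)
  have "0 \<le> p0" "p0 \<le> 1" "0 \<le> q1" "q1 \<le> 1"
    unfolding p0_def q1_def using prob_space.prob_le_1[OF prob_space_PiM] P0_prob P1_prob by auto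
  then have "1 - exp (- \<delta>) \<le> 1 - p0 ^ (n - s) * q1 ^ s"
    using m_bound by (intro support_error_arith[OF s_pos s_half delta_pos D(1) m_nonneg _ _ _ _ _
        samples(3) tradeoff0 tradeoff1]) (simp_all add: D_def)
  then show ?thesis
    using prob_est_support_ne[OF P0_prob P1_prob S_sub dec dec] S_card by (simp add: p0_def q1_def)
qed

end
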